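(* Let $G$ be a graph and let $\{A,B\}$ be a near partition of $V(G)$ (i.e. $A\cap B=\emptyset$, $A\cup B=V(G)$, with $A$ or $B$ possibly empty). Then $$\mathrm{cmp}(G)\le \max\{\mathrm{cmp}(G[A]),\mathrm{cmp}(G[B])\}+|N_G(B)|.$$
   Context: All graphs are finite and simple. $G[X]$ is the induced subgraph on $X$, and $N_G(X)$ is the set of vertices outside $X$ having a neighbor in $X$. A forest decomposition of a graph $G$ is a pair $(F,(W_x)_{x\in V(F)})$ where $F$ is a forest and $W_x\subseteq V(G)$, such that (1) for every vertex $u$ of $G$, $\{x\in V(F)\mid u\in W_x\}$ induces a nonempty connected subgraph of $F$, and (2) every edge $uv$ of $G$ has both ends in some bag $W_x$. Its width is the maximum size of a bag minus one. It is suitable if additionally (3) $F$ is a subgraph of $G$ with $V(F)=V(G)$, and (4) $u\in W_u$ for every $u\in V(G)$. Every graph has a suitable forest decomposition. The complexity $\mathrm{cmp}(G)$ is the minimum width of a suitable forest decomposition of $G$, with the convention $\mathrm{cmp}(G)=0$ if $G$ has no vertices. *)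

theory Defs
  imports Main
begin

definition graph :: "'a set \<Rightarrow> 'a set set \<Rightarrow> bool" where
  "graph V E \<longleftrightarrow> finite V \<and>
     (\<forall>e\<in>E. \<exists>u v. u \<noteq> v \<and> e = {u, v} \<and> u \<in> V \<and> v \<in> V)"

definition induced_edges :: "'a set set \<Rightarrow> 'a set \<Rightarrow> 'a set set" where
  "induced_edges E X = {e \<in> E. e \<subseteq> X}"

definition nbhd :: "'a set \<Rightarrow> 'a set set \<Rightarrow> 'a set \<Rightarrow> 'a set" where
  "nbhd V E X = {v \<in> V - X. \<exists>u\<in>X. {u, v} \<in> E}"

definition is_cycle :: "'a set set \<Rightarrow> 'a list \<Rightarrow> bool" where
  "is_cycle E vs \<longleftrightarrow> distinct vs \<and> length vs \<ge> 3 \<and>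
     (\<forall>i < length vs. {vs ! i, vs ! ((i + 1) mod length vs)} \<in> E)"

definition forest :: "'a set \<Rightarrow> 'a set set \<Rightarrow> bool" where
  "forest V E \<longleftrightarrow> graph V E \<and> (\<nexists>vs. is_cycle E vs)"

definition connected_in :: "'a set set \<Rightarrow> 'a set \<Rightarrow> bool" where
  "connected_in E X \<longleftrightarrow>
     (\<forall>x\<in>X. \<forall>y\<in>X. (\<lambda>a b. a \<in> X \<and> b \<in> X \<and> {a, b} \<in> E)\<^sup>*\<^sup>* x y)"

definition suitable_fd :: "'a set \<Rightarrow> 'a set set \<Rightarrow> 'a set set \<Rightarrow> ('a \<Rightarrow> 'a set) \<Rightarrow> bool" where
  "suitable_fd V E EF W \<longleftrightarrow>
     forest V EF \<and> EF \<subseteq> E \<and>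
     (\<forall>x\<in>V. W x \<subseteq> V) \<and>
     (\<forall>u\<in>V. {x \<in> V. u \<in> W x} \<noteq> {} \<and> connected_in EF {x \<in> V. u \<in> W x}) \<and>
     (\<forall>e\<in>E. \<exists>x\<in>V. e \<subseteq> W x) \<and>
     (\<forall>u\<in>V. u \<in> W u)"

definition fd_width :: "'a set \<Rightarrow> ('a \<Rightarrow> 'a set) \<Rightarrow> nat" where
  "fd_width V W = Max ((\<lambda>x. card (W x)) ` V) - 1"

definition cmp :: "'a set \<Rightarrow> 'a set set \<Rightarrow> nat" where
  "cmp V E = (if V = {} then 0 else
     (LEAST k. \<exists>EF W. suitable_fd V E EF W \<and> fd_width V W = k))"

end

theory Submission
  imports Defs
begin

(* Take optimal suitable decompositions of G[A] and G[B]. Side by side they form a suitable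
   decomposition of the graph with edge set E[A] \<union> E[B] over the forest FA \<union> FB. Extend this
   forest to a maximal spanning forest F of G, so that the ends of every edge of G lie in one
   component of F, and add each vertex u of N = N_G(B) to every bag of its F-component. The nodes
   whose bags contain u then form exactly that component, and an edge pq with p in A and q in B has
   p in N, so it is covered by the bag of q. Each bag grows by at most |N|. *)

definition reach :: "'a set set \<Rightarrow> 'a \<Rightarrow> 'a \<Rightarrow> bool" where
  "reach F = (\<lambda>a b. {a, b} \<in> F)\<^sup>*\<^sup>*"

definition component :: "'a set \<Rightarrow> 'a set set \<Rightarrow> 'a \<Rightarrow> 'a set" where
  "component V F x = {y \<in> V. reach F x y}"

lemma reach_refl [simp]: "reach F x x"
  unfolding reach_def by simp

lemma reach_edge: "{x, y} \<in> F \<Longrightarrow> reach F x y"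
  unfolding reach_def by (rule r_into_rtranclp)

lemma reach_trans: "reach F x y \<Longrightarrow> reach F y z \<Longrightarrow> reach F x z"
  unfolding reach_def by (rule rtranclp_trans)

lemma reach_sym: "reach F x y \<Longrightarrow> reach F y x"
proof -
  have "symp (\<lambda>a b. {a, b} \<in> F)"
    by (rule sympI) (simp add: insert_commute)
  then show "reach F x y \<Longrightarrow> reach F y x"
    unfolding reach_def by (blast dest: symp_rtranclp sympD)
qed

lemma reach_mono: "reach F x y \<Longrightarrow> F \<subseteq> F' \<Longrightarrow> reach F' x y"
  unfolding reach_def by (erule rtranclp_mono[THEN predicate2D, rotated]) auto

lemma connected_in_reach:
  assumes "connected_in F X" "x \<in> X" "y \<in> X"
  shows "reach F x y"
proof -
  have "(\<lambda>a b. a \<in> X \<and> b \<in> X \<and> {a, b} \<in> F)\<^sup>*\<^sup>* x y"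
    using assms unfolding connected_in_def by blast
  then show ?thesis
    unfolding reach_def by (rule rtranclp_mono[THEN predicate2D, rotated]) auto
qed

lemma connected_in_mono: "connected_in F X \<Longrightarrow> F \<subseteq> F' \<Longrightarrow> connected_in F' X"
  unfolding connected_in_def
  by (blast intro: rtranclp_mono[THEN predicate2D, rotated])

lemma graph_edgeE:
  assumes "graph V E" "e \<in> E"
  obtains u v where "e = {u, v}" "u \<noteq> v" "u \<in> V" "v \<in> V"
  using assms unfolding graph_def by blast

lemma graph_edge_subset: "graph V E \<Longrightarrow> e \<in> E \<Longrightarrow> e \<subseteq> V"
  by (erule graph_edgeE) auto

lemma graph_doubleton_edge:
  "graph V E \<Longrightarrow> {x, y} \<in> E \<Longrightarrow> x \<in> V \<and> y \<in> V \<and> x \<noteq> y"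
  by (erule graph_edgeE) (auto simp: doubleton_eq_iff)

lemma graph_finite_edges: "graph V E \<Longrightarrow> finite E"
  using graph_edge_subset unfolding graph_def
  by (meson PowI finite_Pow_iff finite_subset subsetI)

lemma graph_Un:
  assumes "graph A FA" "graph B FB"
  shows "graph (A \<union> B) (FA \<union> FB)"
  unfolding graph_def
proof (intro conjI ballI)
  show "finite (A \<union> B)"
    using assms unfolding graph_def by simp
  fix e assume "e \<in> FA \<union> FB"
  then show "\<exists>u v. u \<noteq> v \<and> e = {u, v} \<and> u \<in> A \<union> B \<and> v \<in> A \<union> B"
    by (elim UnE graph_edgeE[OF assms(1)] graph_edgeE[OF assms(2)]) blast+
qed

lemma graph_induced_edges:
  assumes G: "graph V E" and "X \<subseteq> V"
  shows "graph X (induced_edges E X)"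
  unfolding graph_def
proof (intro conjI ballI)
  show "finite X"
    using G finite_subset[OF \<open>X \<subseteq> V\<close>] unfolding graph_def by blast
  fix e assume "e \<in> induced_edges E X"
  then have "e \<in> E" "e \<subseteq> X"
    unfolding induced_edges_def by simp_all
  then show "\<exists>u v. u \<noteq> v \<and> e = {u, v} \<and> u \<in> X \<and> v \<in> X"
    by (elim graph_edgeE[OF G]) blast
qed

lemma connected_in_component:
  assumes G: "graph V F" and "u \<in> V"
  shows "connected_in F (component V F u)"
proof -
  let ?C = "component V F u"
  let ?R = "\<lambda>a b. a \<in> ?C \<and> b \<in> ?C \<and> {a, b} \<in> F"
  have from_u: "?R\<^sup>*\<^sup>* u x" if "reach F u x" for x
    using that unfolding reach_def
  proof (induction rule: rtranclp_induct)
    case (step y z)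
    then have "reach F u y" "reach F u z"
      unfolding reach_def by (auto intro: rtranclp.rtrancl_into_rtrancl)
    with step.hyps(2) have "?R y z"
      using graph_doubleton_edge[OF G] unfolding component_def by blast
    with step.IH show ?case by (rule rtranclp.rtrancl_into_rtrancl)
  qed simp
  have "symp ?R"
    by (rule sympI) (auto simp: insert_commute)
  then have "?R\<^sup>*\<^sup>* x y" if "x \<in> ?C" "y \<in> ?C" for x y
    using from_u that unfolding component_def
    by (metis (no_types, lifting) mem_Collect_eq rtranclp_trans symp_rtranclp sympD)
  then show ?thesis unfolding connected_in_def by blast
qed

lemma cycle_edge:
  "is_cycle E vs \<Longrightarrow> i < length vs \<Longrightarrow> {vs ! i, vs ! ((i + 1) mod length vs)} \<in> E"
  unfolding is_cycle_def by blast

lemma mod_succ_succ_neq: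
  fixes i n :: nat
  assumes "i < n" "3 \<le> n"
  shows "((i + 1) mod n + 1) mod n \<noteq> i"
  using assms by (cases "i + 1 = n"; cases "i + 2 = n") (auto simp: mod_if)

lemma cycle_edge_index_unique:
  assumes cyc: "is_cycle E vs" and ij: "i < length vs" "j < length vs"
    and same: "{vs ! i, vs ! ((i + 1) mod length vs)} = {vs ! j, vs ! ((j + 1) mod length vs)}"
  shows "i = j"
proof (rule ccontr)
  let ?n = "length vs"
  have n: "3 \<le> ?n" and dist: "distinct vs"
    using cyc unfolding is_cycle_def by auto
  then have "0 < ?n"
    by linarith
  then have succ: "(i + 1) mod ?n < ?n" "(j + 1) mod ?n < ?n"
    by simp_all
  assume "i \<noteq> j"
  then have "vs ! i = vs ! ((j + 1) mod ?n)" "vs ! j = vs ! ((i + 1) mod ?n)"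
    using same nth_eq_iff_index_eq[OF dist ij] unfolding doubleton_eq_iff by auto
  then have "(j + 1) mod ?n = i" "(i + 1) mod ?n = j"
    using nth_eq_iff_index_eq[OF dist] ij succ by simp_all
  then have "((i + 1) mod ?n + 1) mod ?n = i"
    by (simp only:)
  with mod_succ_succ_neq[OF ij(1) n] show False
    by contradiction
qed

lemma cycle_reach_around:
  assumes cyc: "is_cycle E vs" and i: "i < length vs"
    and others: "\<And>j. j < length vs \<Longrightarrow> j \<noteq> i \<Longrightarrow> {vs ! j, vs ! ((j + 1) mod length vs)} \<in> F"
  shows "reach F (vs ! ((i + 1) mod length vs)) (vs ! i)"
proof -
  let ?n = "length vs"
  have "0 < ?n"
    using i by linarith
  have around: "reach F (vs ! ((i + 1) mod ?n)) (vs ! ((i + 1 + k) mod ?n))" if "k < ?n" for k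
    using that
  proof (induction k)
    case (Suc k)
    let ?j = "(i + 1 + k) mod ?n"
    have "?j \<noteq> i"
      using i Suc.prems by (cases "i + 1 + k < ?n") (auto simp: le_mod_geq)
    then have "{vs ! ?j, vs ! ((i + 1 + Suc k) mod ?n)} \<in> F"
      using others[of ?j] \<open>0 < ?n\<close> by (simp add: mod_Suc_eq)
    then have "reach F (vs ! ?j) (vs ! ((i + 1 + Suc k) mod ?n))"
      by (rule reach_edge)
    moreover have "reach F (vs ! ((i + 1) mod ?n)) (vs ! ?j)"
      using Suc by simp
    ultimately show ?case
      by (rule reach_trans[rotated])
  qed simp
  have "i + 1 + (?n - 1) = i + ?n"
    using \<open>0 < ?n\<close> by simp
  then have "(i + 1 + (?n - 1)) mod ?n = i"
    using i by simp
  with around[of "?n - 1"] \<open>0 < ?n\<close> show ?thesis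
    by (metis diff_less zero_less_one)
qed

lemma forest_empty: "finite V \<Longrightarrow> forest V {}"
  unfolding forest_def graph_def is_cycle_def by fastforce

lemma forest_insert_edge:
  assumes F: "forest V F" and ab: "a \<in> V" "b \<in> V" "a \<noteq> b" and unlinked: "\<not> reach F a b"
  shows "forest V (insert {a, b} F)"
proof -
  have "\<not> is_cycle (insert {a, b} F) vs" for vs
  proof
    assume cyc: "is_cycle (insert {a, b} F) vs"
    let ?n = "length vs"
    let ?e = "\<lambda>i. {vs ! i, vs ! ((i + 1) mod ?n)}"
    have "\<not> is_cycle F vs"
      using F unfolding forest_def by blast
    then obtain i where i: "i < ?n" "?e i \<notin> F"
      using cyc unfolding is_cycle_def by auto
    then have ei: "?e i = {a, b}"
      using cycle_edge[OF cyc] by blast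
    have "?e j \<in> F" if "j < ?n" "j \<noteq> i" for j
      using cycle_edge[OF cyc that(1)] cycle_edge_index_unique[OF cyc i(1) that(1)] ei that(2)
      by auto
    then have "reach F (vs ! ((i + 1) mod ?n)) (vs ! i)"
      by (rule cycle_reach_around[OF cyc i(1)])
    with ei unlinked show False
      unfolding doubleton_eq_iff by (blast dest: reach_sym)
  qed
  with F ab show ?thesis
    unfolding forest_def graph_def by blast
qed

lemma forest_extend_maximal:
  assumes G: "graph V E" and "forest V F" "F \<subseteq> E"
  shows "\<exists>F'. forest V F' \<and> F \<subseteq> F' \<and> F' \<subseteq> E \<and> (\<forall>x y. {x, y} \<in> E \<longrightarrow> reach F' x y)"
  using assms(2,3)
proof (induction "card (E - F)" arbitrary: F rule: less_induct)
  case less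
  show ?case
  proof (cases "\<forall>x y. {x, y} \<in> E \<longrightarrow> reach F x y")
    case True
    then show ?thesis
      using less.prems by blast
  next
    case False
    then obtain x y where xy: "{x, y} \<in> E" "\<not> reach F x y"
      by auto
    then have "{x, y} \<in> E - F"
      using reach_edge[of x y F] by blast
    then have "card (E - F - {{x, y}}) < card (E - F)"
      by (rule card_Diff1_less[OF finite_Diff[OF graph_finite_edges[OF G]]])
    moreover have "E - F - {{x, y}} = E - insert {x, y} F"
      by blast
    ultimately have "card (E - insert {x, y} F) < card (E - F)"
      by metis
    moreover have "forest V (insert {x, y} F)"
      using forest_insert_edge[OF less.prems(1)] graph_doubleton_edge[OF G xy(1)] xy(2) by blast
    moreover have "insert {x, y} F \<subseteq> E"
      using xy(1) less.prems(2) by blast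
    ultimately have "\<exists>F'. forest V F' \<and> insert {x, y} F \<subseteq> F' \<and> F' \<subseteq> E \<and>
        (\<forall>x y. {x, y} \<in> E \<longrightarrow> reach F' x y)"
      by (rule less.hyps)
    then show ?thesis
      by (auto simp: insert_subset)
  qed
qed

lemma cycle_stays_in_part:
  assumes cyc: "is_cycle (FA \<union> FB) vs" and inside: "\<forall>e\<in>FA. e \<subseteq> A"
    and outside: "\<forall>e\<in>FB. e \<inter> A = {}" and start: "vs ! 0 \<in> A"
  shows "is_cycle FA vs"
proof -
  have vs_in_A: "vs ! k \<in> A" if "k < length vs" for k
    using that
  proof (induction k)
    case (Suc k)
    then have "k < length vs" "(k + 1) mod length vs = Suc k"
      by simp_all
    then have "vs ! k \<in> A" "{vs ! k, vs ! Suc k} \<in> FA \<union> FB"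
      using Suc.IH cycle_edge[OF cyc, of k] by simp_all
    then have "{vs ! k, vs ! Suc k} \<in> FA"
      using outside by auto
    then show ?case
      using inside by auto
  qed (simp add: start)
  have "{vs ! i, vs ! ((i + 1) mod length vs)} \<in> FA" if "i < length vs" for i
    using cycle_edge[OF cyc that] vs_in_A[OF that] outside by auto
  then show ?thesis
    using cyc unfolding is_cycle_def by simp
qed

lemma forest_Un_disjoint:
  assumes FA: "forest A FA" and FB: "forest B FB" and disj: "A \<inter> B = {}"
  shows "forest (A \<union> B) (FA \<union> FB)"
proof -
  have inA: "\<forall>e\<in>FA. e \<subseteq> A" and inB: "\<forall>e\<in>FB. e \<subseteq> B"
    using FA FB graph_edge_subset unfolding forest_def by blast+
  then have outA: "\<forall>e\<in>FB. e \<inter> A = {}" and outB: "\<forall>e\<in>FA. e \<inter> B = {}"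
    using disj by blast+
  have "\<not> is_cycle (FA \<union> FB) vs" for vs
  proof
    assume cyc: "is_cycle (FA \<union> FB) vs"
    then have "vs ! 0 \<in> A \<union> B"
      using cycle_edge[OF cyc, of 0] inA inB unfolding is_cycle_def by fastforce
    then show False
    proof
      assume "vs ! 0 \<in> A"
      then have "is_cycle FA vs"
        using cycle_stays_in_part[OF cyc inA outA] by blast
      with FA show False unfolding forest_def by blast
    next
      assume "vs ! 0 \<in> B"
      moreover have "is_cycle (FB \<union> FA) vs"
        using cyc by (simp add: Un_commute)
      ultimately have "is_cycle FB vs"
        using cycle_stays_in_part inB outB by blast
      with FB show False unfolding forest_def by blast
    qed
  qed
  moreover have "graph (A \<union> B) (FA \<union> FB)"
    using FA FB graph_Un unfolding forest_def by blast
  ultimately show ?thesis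
    unfolding forest_def by blast
qed

lemma suitable_fdD:
  assumes "suitable_fd V E F W"
  shows "forest V F" "F \<subseteq> E" "x \<in> V \<Longrightarrow> W x \<subseteq> V"
    "u \<in> V \<Longrightarrow> connected_in F {x \<in> V. u \<in> W x}" "e \<in> E \<Longrightarrow> \<exists>x\<in>V. e \<subseteq> W x"
    "u \<in> V \<Longrightarrow> u \<in> W u"
  using assms unfolding suitable_fd_def by blast+

lemma suitable_fd_bag_reach:
  assumes fd: "suitable_fd V E F W" and x: "x \<in> V" "u \<in> W x"
  shows "reach F x u"
proof -
  have "u \<in> V" "u \<in> W u"
    using suitable_fdD(3,6)[OF fd] x by blast+
  with x show ?thesis
    using connected_in_reach[OF suitable_fdD(4)[OF fd \<open>u \<in> V\<close>]] by simp
qed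

lemma suitable_fd_disjoint_Un:
  assumes A: "suitable_fd A EA FA WA" and B: "suitable_fd B EB FB WB" and disj: "A \<inter> B = {}"
  shows "suitable_fd (A \<union> B) (EA \<union> EB) (FA \<union> FB) (\<lambda>x. if x \<in> A then WA x else WB x)"
  unfolding suitable_fd_def
proof (intro conjI ballI)
  let ?W = "\<lambda>x. if x \<in> A then WA x else WB x"
  note WA = suitable_fdD(3)[OF A] and WB = suitable_fdD(3)[OF B]
  show "forest (A \<union> B) (FA \<union> FB)"
    using forest_Un_disjoint[OF suitable_fdD(1)[OF A] suitable_fdD(1)[OF B] disj] .
  show "FA \<union> FB \<subseteq> EA \<union> EB"
    using suitable_fdD(2)[OF A] suitable_fdD(2)[OF B] by blast
  fix u assume u: "u \<in> A \<union> B"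
  show "?W u \<subseteq> A \<union> B" "u \<in> ?W u"
    using u WA WB suitable_fdD(6)[OF A] suitable_fdD(6)[OF B] disj by auto
  then show "{x \<in> A \<union> B. u \<in> ?W x} \<noteq> {}"
    using u by blast
  show "connected_in (FA \<union> FB) {x \<in> A \<union> B. u \<in> ?W x}"
  proof (cases "u \<in> A")
    case True
    then have "u \<notin> WB x" if "x \<in> B" for x
      using WB[OF that] disj by blast
    then have "{x \<in> A \<union> B. u \<in> ?W x} = {x \<in> A. u \<in> WA x}"
      by auto
    with True show ?thesis
      using connected_in_mono[OF suitable_fdD(4)[OF A True], of "FA \<union> FB"] by simp
  next
    case False
    with u have "u \<in> B"
      by blast
    moreover have "u \<notin> WA x" if "x \<in> A" for x
      using WA[OF that] False by blast
    moreover have "x \<notin> A" if "x \<in> B" for x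
      using disj that by blast
    ultimately have "{x \<in> A \<union> B. u \<in> ?W x} = {x \<in> B. u \<in> WB x}"
      by auto
    with \<open>u \<in> B\<close> show ?thesis
      using connected_in_mono[OF suitable_fdD(4)[OF B], of u "FA \<union> FB"] by simp
  qed
next
  let ?W = "\<lambda>x. if x \<in> A then WA x else WB x"
  fix e assume "e \<in> EA \<union> EB"
  then show "\<exists>x\<in>A \<union> B. e \<subseteq> ?W x"
  proof
    assume "e \<in> EA"
    then obtain x where "x \<in> A" "e \<subseteq> WA x"
      using suitable_fdD(5)[OF A] by blast
    then show ?thesis
      by auto
  next
    assume "e \<in> EB"
    then obtain x where "x \<in> B" "e \<subseteq> WB x"
      using suitable_fdD(5)[OF B] by blast
    moreover have "x \<notin> A"
      using \<open>x \<in> B\<close> disj by blast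
    ultimately show ?thesis
      by auto
  qed
qed

lemma suitable_fd_add_component_bags:
  assumes G: "graph V E" and fd: "suitable_fd V E0 F W"
    and F': "forest V F'" "F \<subseteq> F'" "F' \<subseteq> E"
    and E_reach: "\<And>x y. {x, y} \<in> E \<Longrightarrow> reach F' x y"
    and new_edges: "\<And>e. e \<in> E \<Longrightarrow> e \<notin> E0 \<Longrightarrow> e \<inter> N \<noteq> {}"
  shows "suitable_fd V E F' (\<lambda>x. W x \<union> (N \<inter> component V F' x))"
  unfolding suitable_fd_def
proof (intro conjI ballI)
  let ?W = "\<lambda>x. W x \<union> (N \<inter> component V F' x)"
  note self = suitable_fdD(6)[OF fd]
  show "forest V F'" "F' \<subseteq> E"
    using F' by blast+
  fix u assume u: "u \<in> V"
  show "?W u \<subseteq> V" "u \<in> ?W u"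
    using u suitable_fdD(3)[OF fd] self unfolding component_def by auto
  then show "{x \<in> V. u \<in> ?W x} \<noteq> {}"
    using u by blast
  show "connected_in F' {x \<in> V. u \<in> ?W x}"
  proof (cases "u \<in> N")
    case True
    have "reach F' x u" if "x \<in> V" "u \<in> W x" for x
      using suitable_fd_bag_reach[OF fd that] F'(2) by (rule reach_mono)
    with True u have "{x \<in> V. u \<in> ?W x} = component V F' u"
      unfolding component_def by (auto dest: reach_sym)
    then show ?thesis
      using connected_in_component[OF _ u] F'(1) unfolding forest_def by simp
  next
    case False
    then have "{x \<in> V. u \<in> ?W x} = {x \<in> V. u \<in> W x}"
      by auto
    then show ?thesis
      using connected_in_mono[OF suitable_fdD(4)[OF fd u] F'(2)] by simp
  qed
next
  let ?W = "\<lambda>x. W x \<union> (N \<inter> component V F' x)"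
  fix e assume e: "e \<in> E"
  show "\<exists>x\<in>V. e \<subseteq> ?W x"
  proof (cases "e \<in> E0")
    case True
    then obtain x where "x \<in> V" "e \<subseteq> W x"
      using suitable_fdD(5)[OF fd] by blast
    then show ?thesis
      by blast
  next
    case False
    have cover: "{p, q} \<subseteq> ?W q" if "{p, q} \<in> E" "p \<in> N" "p \<in> V" "q \<in> V" for p q
    proof -
      have "reach F' q p"
        using E_reach[of q p] that(1) by (simp add: insert_commute)
      with that(2-4) suitable_fdD(6)[OF fd] show ?thesis
        unfolding component_def by simp
    qed
    obtain u v where uv: "e = {u, v}" "u \<in> V" "v \<in> V"
      by (rule graph_edgeE[OF G e])
    with new_edges[OF e False] have "u \<in> N \<or> v \<in> N"
      by blast
    then show ?thesis
    proof
      assume "u \<in> N"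
      then show ?thesis
        using cover[of u v] e uv by blast
    next
      assume "v \<in> N"
      moreover have "{v, u} = e"
        using uv(1) by blast
      ultimately show ?thesis
        using cover[of v u] e uv(2,3) by blast
    qed
  qed
qed

lemma suitable_fd_exists:
  assumes G: "graph V E"
  shows "\<exists>F W. suitable_fd V E F W"
proof -
  have "finite V"
    using G unfolding graph_def by blast
  then have trivial: "suitable_fd V {} {} (\<lambda>x. {x})"
    unfolding suitable_fd_def connected_in_def by (auto simp: forest_empty)
  obtain F' where F': "forest V F'" "F' \<subseteq> E" "\<forall>x y. {x, y} \<in> E \<longrightarrow> reach F' x y"
    using forest_extend_maximal[OF G forest_empty[OF \<open>finite V\<close>]] by auto
  have "e \<inter> V \<noteq> {}" if "e \<in> E" for e
    using graph_edgeE[OF G that] by blast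
  with F' have "suitable_fd V E F' (\<lambda>x. {x} \<union> (V \<inter> component V F' x))"
    by (intro suitable_fd_add_component_bags[OF G trivial]) auto
  then show ?thesis by blast
qed

lemma cmp_le_of_bag_card_le:
  assumes fd: "suitable_fd V E F W" and bags: "\<And>x. x \<in> V \<Longrightarrow> card (W x) \<le> k + 1"
  shows "cmp V E \<le> k"
proof (cases "V = {}")
  case False
  have "finite V"
    using suitable_fdD(1)[OF fd] unfolding forest_def graph_def by blast
  with False bags have "fd_width V W \<le> k"
    unfolding fd_width_def by (simp add: Max_le_iff le_diff_conv)
  moreover have "cmp V E \<le> fd_width V W"
    using fd False unfolding cmp_def by (auto intro: Least_le)
  ultimately show ?thesis
    by linarith
qed (simp add: cmp_def)

lemma cmp_attained:
  assumes G: "graph V E"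
  obtains F W where "suitable_fd V E F W" "\<And>x. x \<in> V \<Longrightarrow> card (W x) \<le> cmp V E + 1"
proof (cases "V = {}")
  case True
  obtain F W where "suitable_fd V E F W"
    using suitable_fd_exists[OF G] by blast
  then show ?thesis
    by (rule that) (simp add: True)
next
  case False
  have "\<exists>k F W. suitable_fd V E F W \<and> fd_width V W = k"
    using suitable_fd_exists[OF G] by blast
  from LeastI_ex[OF this] False obtain F W
    where fd: "suitable_fd V E F W" and width: "fd_width V W = cmp V E"
    unfolding cmp_def by auto
  have "card (W x) \<le> cmp V E + 1" if "x \<in> V" for x
  proof -
    have "card (W x) \<le> Max ((\<lambda>x. card (W x)) ` V)"
      using G that unfolding graph_def by simp
    with width show ?thesis
      unfolding fd_width_def by linarith
  qed
  with fd show ?thesis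
    by (rule that)
qed

lemma edge_across_meets_nbhd:
  assumes G: "graph V E" and "A \<inter> B = {}" "A \<union> B = V"
    and e: "e \<in> E" "\<not> e \<subseteq> A" "\<not> e \<subseteq> B"
  shows "e \<inter> nbhd V E B \<noteq> {}"
proof -
  obtain p q where "e = {p, q}" "p \<in> A" "q \<in> B"
    using graph_edgeE[OF G e(1)] assms(2,3) e(2,3) by (metis UnE empty_subsetI insert_commute insert_subset)
  with assms(2,3) e(1) have "p \<in> nbhd V E B"
    unfolding nbhd_def by (auto simp: insert_commute)
  with \<open>e = {p, q}\<close> show ?thesis by blast
qed

lemma suitable_fd_near_partition:
  assumes G: "graph V E" and disj: "A \<inter> B = {}" and cover: "A \<union> B = V"
    and A: "suitable_fd A (induced_edges E A) FA WA"
    and B: "suitable_fd B (induced_edges E B) FB WB"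
  obtains F where
    "suitable_fd V E F (\<lambda>x. (if x \<in> A then WA x else WB x) \<union> (nbhd V E B \<inter> component V F x))"
proof -
  let ?EA = "induced_edges E A" and ?EB = "induced_edges E B"
  define W where "W x = (if x \<in> A then WA x else WB x)" for x
  have fd: "suitable_fd V (?EA \<union> ?EB) (FA \<union> FB) W"
    using suitable_fd_disjoint_Un[OF A B disj] cover unfolding W_def by simp
  moreover have "?EA \<union> ?EB \<subseteq> E"
    unfolding induced_edges_def by blast
  ultimately have "forest V (FA \<union> FB)" "FA \<union> FB \<subseteq> E"
    using suitable_fdD(1,2)[OF fd] by blast+
  from forest_extend_maximal[OF G this] obtain F where F: "forest V F" "FA \<union> FB \<subseteq> F" "F \<subseteq> E"
    "\<forall>x y. {x, y} \<in> E \<longrightarrow> reach F x y"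
    by auto
  have "suitable_fd V E F (\<lambda>x. W x \<union> (nbhd V E B \<inter> component V F x))"
    using F edge_across_meets_nbhd[OF G disj cover]
    by (intro suitable_fd_add_component_bags[OF G fd]) (auto simp: induced_edges_def)
  then show ?thesis
    unfolding W_def by (rule that)
qed

theorem lemma3p2:
  assumes "graph V E"
    and "A \<inter> B = {}"
    and "A \<union> B = V"
  shows "cmp V E \<le> max (cmp A (induced_edges E A)) (cmp B (induced_edges E B))
                    + card (nbhd V E B)"
proof -
  let ?EA = "induced_edges E A" and ?EB = "induced_edges E B" and ?N = "nbhd V E B"
  have "A \<subseteq> V" "B \<subseteq> V" "finite V"
    using assms unfolding graph_def by auto
  obtain FA WA where A: "suitable_fd A ?EA FA WA"
    and cardA: "\<And>x. x \<in> A \<Longrightarrow> card (WA x) \<le> cmp A ?EA + 1"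
    using cmp_attained[OF graph_induced_edges[OF assms(1) \<open>A \<subseteq> V\<close>]] by blast
  obtain FB WB where B: "suitable_fd B ?EB FB WB"
    and cardB: "\<And>x. x \<in> B \<Longrightarrow> card (WB x) \<le> cmp B ?EB + 1"
    using cmp_attained[OF graph_induced_edges[OF assms(1) \<open>B \<subseteq> V\<close>]] by blast
  obtain F where "suitable_fd V E F (\<lambda>x. (if x \<in> A then WA x else WB x) \<union> (?N \<inter> component V F x))"
    by (rule suitable_fd_near_partition[OF assms A B])
  then show ?thesis
  proof (rule cmp_le_of_bag_card_le)
    fix x assume "x \<in> V"
    then have "card (if x \<in> A then WA x else WB x) \<le> max (cmp A ?EA) (cmp B ?EB) + 1"
      using cardA cardB assms(3) by fastforce
    moreover have "card (?N \<inter> component V F x) \<le> card ?N"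
      using \<open>finite V\<close> unfolding nbhd_def by (intro card_mono) auto
    ultimately show "card ((if x \<in> A then WA x else WB x) \<union> (?N \<inter> component V F x))
        \<le> max (cmp A ?EA) (cmp B ?EB) + card ?N + 1"
      using card_Un_le[of "if x \<in> A then WA x else WB x" "?N \<inter> component V F x"] by linarith
  qed
qed

end
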